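(* Let $\mathtt{L}\in\mathcal{L}$ be a line of $\mathbb{S}$ and let $\alpha\in P\cup P'$. If $\alpha$ has distance $3$ (in $\mathbb{S}$) from two points of $\mathtt{L}$, then $\alpha$ has distance $2$ from the third point of $\mathtt{L}$.
   Context: Let $S=(P,L)$ and $S'=(P',L')$ be generalized quadrangles of order $(2,2)$ (every line has 3 points, every point lies on 3 lines, and for each point $x$ and line $l\not\ni x$ exactly one point of $l$ is collinear with $x$), with an isomorphism $x\mapsto x'$ from $S$ to $S'$. In a point-line geometry, $x^{\perp}$ is $x$ together with all points collinear with $x$, and $A^{\perp}=\bigcap_{a\in A}a^{\perp}$. A triad is a set of three pairwise non-collinear points, complete if $|T^{\perp}|=3$. Let $\mathcal{P}=\{(x,y')\in P\times P':y'\in x'^{\perp}\}$ and $\mathcal{L}$ the set of all $3$-subsets $\{(x,u'),(y,v'),(z,w')\}$ of $\mathcal{P}$ where $T=\{x,y,z\}$ (three distinct points) is a line or complete triad of $S$ and $\{u',v',w'\}=T'^{\perp}$ in $S'$ with $u',v',w'$ distinct. The geometry $\mathbb{S}=(\mathbb{P},\mathbb{L})$ has point set $\mathbb{P}=\mathcal{P}\cup P\cup P'$ (disjoint union) and line set $\mathcal{L}\cup\{\{x,(x,u'),u'\}:(x,u')\in\mathcal{P}\}$. Distances are in the collinearity graph of $\mathbb{S}$. *)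

theory Defs
  imports Main
begin

definition collinear :: "'a set \<Rightarrow> 'a set set \<Rightarrow> 'a \<Rightarrow> 'a \<Rightarrow> bool" where
  "collinear P L x y \<longleftrightarrow> x \<noteq> y \<and> x \<in> P \<and> y \<in> P \<and> (\<exists>l\<in>L. x \<in> l \<and> y \<in> l)"

definition perp :: "'a set \<Rightarrow> 'a set set \<Rightarrow> 'a \<Rightarrow> 'a set" where
  "perp P L x = insert x {y. collinear P L x y}"

definition setperp :: "'a set \<Rightarrow> 'a set set \<Rightarrow> 'a set \<Rightarrow> 'a set" where
  "setperp P L A = {y \<in> P. \<forall>a\<in>A. y \<in> perp P L a}"

definition gq22 :: "'a set \<Rightarrow> 'a set set \<Rightarrow> bool" where
  "gq22 P L \<longleftrightarrow>
     (\<forall>l\<in>L. l \<subseteq> P \<and> card l = 3) \<and>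
     (\<forall>x\<in>P. card {l\<in>L. x \<in> l} = 3) \<and>
     (\<forall>x\<in>P. \<forall>l\<in>L. x \<notin> l \<longrightarrow> (\<exists>!y. y \<in> l \<and> collinear P L x y))"

definition triad :: "'a set \<Rightarrow> 'a set set \<Rightarrow> 'a set \<Rightarrow> bool" where
  "triad P L T \<longleftrightarrow> (\<exists>x y z. T = {x, y, z} \<and> x \<in> P \<and> y \<in> P \<and> z \<in> P \<and>
      x \<noteq> y \<and> x \<noteq> z \<and> y \<noteq> z \<and>
      \<not> collinear P L x y \<and> \<not> collinear P L x z \<and> \<not> collinear P L y z)"

definition complete_triad :: "'a set \<Rightarrow> 'a set set \<Rightarrow> 'a set \<Rightarrow> bool" where
  "complete_triad P L T \<longleftrightarrow> triad P L T \<and> card (setperp P L T) = 3"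

definition geom_iso :: "('a \<Rightarrow> 'b) \<Rightarrow> 'a set \<Rightarrow> 'a set set \<Rightarrow> 'b set \<Rightarrow> 'b set set \<Rightarrow> bool" where
  "geom_iso f P L P' L' \<longleftrightarrow> bij_betw f P P' \<and> (\<forall>l. l \<subseteq> P \<longrightarrow> (l \<in> L \<longleftrightarrow> f ` l \<in> L'))"

text \<open>Points of \<S>: disjoint union of the pairs, P and P'.\<close>
datatype ('a, 'b) bpt = BPair 'a 'b | BS 'a | BS' 'b

definition calP :: "'a set \<Rightarrow> 'a set set \<Rightarrow> 'b set \<Rightarrow> 'b set set \<Rightarrow> ('a \<Rightarrow> 'b) \<Rightarrow> ('a \<times> 'b) set" where
  "calP P L P' L' f = {(x, u). x \<in> P \<and> u \<in> perp P' L' (f x)}"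

definition calL :: "'a set \<Rightarrow> 'a set set \<Rightarrow> 'b set \<Rightarrow> 'b set set \<Rightarrow> ('a \<Rightarrow> 'b) \<Rightarrow> ('a, 'b) bpt set set" where
  "calL P L P' L' f =
    {{BPair x u, BPair y v, BPair z w} | x y z u v w.
        (x, u) \<in> calP P L P' L' f \<and> (y, v) \<in> calP P L P' L' f \<and> (z, w) \<in> calP P L P' L' f \<and>
        x \<noteq> y \<and> x \<noteq> z \<and> y \<noteq> z \<and>
        ({x, y, z} \<in> L \<or> complete_triad P L {x, y, z}) \<and>
        u \<noteq> v \<and> u \<noteq> w \<and> v \<noteq> w \<and>
        {u, v, w} = setperp P' L' (f ` {x, y, z})}"

definition bpoints :: "'a set \<Rightarrow> 'a set set \<Rightarrow> 'b set \<Rightarrow> 'b set set \<Rightarrow> ('a \<Rightarrow> 'b) \<Rightarrow> ('a, 'b) bpt set" where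
  "bpoints P L P' L' f =
     (\<lambda>(x, u). BPair x u) ` calP P L P' L' f \<union> BS ` P \<union> BS' ` P'"

definition blines :: "'a set \<Rightarrow> 'a set set \<Rightarrow> 'b set \<Rightarrow> 'b set set \<Rightarrow> ('a \<Rightarrow> 'b) \<Rightarrow> ('a, 'b) bpt set set" where
  "blines P L P' L' f =
     calL P L P' L' f \<union> {{BS x, BPair x u, BS' u} | x u. (x, u) \<in> calP P L P' L' f}"

definition badj :: "'a set \<Rightarrow> 'a set set \<Rightarrow> 'b set \<Rightarrow> 'b set set \<Rightarrow> ('a \<Rightarrow> 'b) \<Rightarrow> (('a, 'b) bpt \<times> ('a, 'b) bpt) set" where
  "badj P L P' L' f = {(a, b). a \<noteq> b \<and> (\<exists>l\<in>blines P L P' L' f. a \<in> l \<and> b \<in> l)}"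

definition has_dist :: "('c \<times> 'c) set \<Rightarrow> 'c \<Rightarrow> 'c \<Rightarrow> nat \<Rightarrow> bool" where
  "has_dist R a b n \<longleftrightarrow> (a, b) \<in> R ^^ n \<and> (\<forall>m<n. (a, b) \<notin> R ^^ m)"

end

theory Submission
  imports Defs
begin

(* From BS a the point BPair x u is within distance 2 whenever u lies in the perp of f a (path
   a, u, (x, u)); from BS' b it is whenever b lies in the perp of f x (path b, x, (x, u)).
   So for a line {(x, u), (y, v), (z, w)} of calL it suffices that every point of S' lies in the
   perp of some point of U = {u, v, w} and of some point of T' = f ` {x, y, z}: a point at distance 3
   from two points of the line must then be covered through the third one.  If {x, y, z} is a line,
   then U = T' is a line of S' and the covering is the GQ axiom.  If it is a complete triad, then T'
   and U are triads with every point of one collinear with every point of the other, and in a GQ(2,2)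
   every point is collinear with or equal to a point of each side of such a 3 x 3 grid. *)

lemma collinear_commute: "collinear P L x y \<longleftrightarrow> collinear P L y x"
  unfolding collinear_def by blast

lemma mem_perp_iff: "x \<in> perp P L y \<longleftrightarrow> x = y \<or> collinear P L x y"
  unfolding perp_def collinear_def by blast

lemma perp_commute: "x \<in> perp P L y \<longleftrightarrow> y \<in> perp P L x"
  unfolding perp_def collinear_def by blast

lemma triad_not_collinear:
  assumes "triad P L T" "a \<in> T" "b \<in> T"
  shows "\<not> collinear P L a b"
  using assms unfolding triad_def collinear_def by blast

lemma setperp_triad_collinear:
  assumes "triad P L T" "u \<in> setperp P L T" "x \<in> T"
  shows "collinear P L u x"
proof -
  obtain y where "y \<in> T" "y \<noteq> x"
    using assms(1) unfolding triad_def by blast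
  moreover have "u = x \<or> collinear P L x u" "u = y \<or> collinear P L y u"
    using assms(2,3) \<open>y \<in> T\<close> unfolding setperp_def perp_def by auto
  ultimately show ?thesis
    using triad_not_collinear[OF assms(1) \<open>x \<in> T\<close> \<open>y \<in> T\<close>] collinear_commute by metis
qed

locale gq22_space =
  fixes P :: "'a set" and L :: "'a set set"
  assumes gq22: "gq22 P L"
begin

abbreviation col :: "'a \<Rightarrow> 'a \<Rightarrow> bool" where "col \<equiv> collinear P L"

lemma line_subset: "l \<in> L \<Longrightarrow> l \<subseteq> P"
  using gq22 unfolding gq22_def by blast

lemma card_line: "l \<in> L \<Longrightarrow> card l = 3"
  using gq22 unfolding gq22_def by blast

lemma finite_line: "l \<in> L \<Longrightarrow> finite l"
  using card_line by (metis card.infinite zero_neq_numeral)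

lemma card_lines_through: "x \<in> P \<Longrightarrow> card {l \<in> L. x \<in> l} = 3"
  using gq22 unfolding gq22_def by blast

lemma ex1_collinear_on_line:
  "x \<in> P \<Longrightarrow> l \<in> L \<Longrightarrow> x \<notin> l \<Longrightarrow> \<exists>!y. y \<in> l \<and> col x y"
  using gq22[unfolded gq22_def, THEN conjunct2, THEN conjunct2] by blast

lemma collinearI: "l \<in> L \<Longrightarrow> x \<in> l \<Longrightarrow> y \<in> l \<Longrightarrow> x \<noteq> y \<Longrightarrow> col x y"
  unfolding collinear_def using line_subset by blast

lemma collinearE:
  assumes "col x y"
  obtains l where "l \<in> L" "x \<in> l" "y \<in> l"
  using assms unfolding collinear_def by blast

lemma perp_if_on_line: "l \<in> L \<Longrightarrow> x \<in> l \<Longrightarrow> y \<in> l \<Longrightarrow> x \<in> perp P L y"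
  unfolding perp_def using collinearI collinear_commute by blast

lemma on_line_if_collinear_two_points:
  assumes "x \<in> P" "l \<in> L" "c \<in> l" "d \<in> l" "c \<noteq> d" "col x c" "col x d"
  shows "x \<in> l"
  using ex1_collinear_on_line[OF assms(1,2)] assms(3-7) by blast

lemma line_eq_if_two_points:
  assumes "l \<in> L" "m \<in> L" "p \<in> l" "q \<in> l" "p \<in> m" "q \<in> m" "p \<noteq> q"
  shows "l = m"
proof (rule ccontr)
  assume "l \<noteq> m"
  moreover have "l \<subseteq> m \<Longrightarrow> l = m"
    by (intro card_subset_eq finite_line) (simp_all add: card_line assms(1,2))
  ultimately obtain r where r: "r \<in> l" "r \<notin> m" by blast
  then have "r \<noteq> p" "r \<noteq> q" using assms by auto
  then have "col r p" "col r q" using collinearI[OF assms(1) r(1)] assms(3,4) by auto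
  then show False
    using on_line_if_collinear_two_points[of r m p q] line_subset assms r by blast
qed

lemma line_third_point:
  assumes "l \<in> L" "a \<in> l" "c \<in> l" "a \<noteq> c"
  obtains s where "l = {a, c, s}" "s \<noteq> a" "s \<noteq> c"
proof -
  have "card (l - {a, c}) = 1"
    using card_line[OF assms(1)] assms(2-4) finite_line[OF assms(1)] by (simp add: card_Diff_subset)
  then obtain s where s: "l - {a, c} = {s}" by (auto simp: card_Suc_eq)
  then have "l = {a, c, s}" using assms(2,3) by auto
  moreover have "s \<noteq> a" "s \<noteq> c" using s by auto
  ultimately show ?thesis by (rule that)
qed

lemma collinear_triangle:
  assumes "col p q" "col q r" "col p r"
  obtains l where "l \<in> L" "p \<in> l" "q \<in> l" "r \<in> l"
proof -
  obtain l where l: "l \<in> L" "p \<in> l" "q \<in> l" using assms(1) by (rule collinearE)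
  moreover have "r \<in> l"
  proof (rule on_line_if_collinear_two_points[OF _ l])
    show "r \<in> P" "p \<noteq> q" using assms(1,2) unfolding collinear_def by auto
    show "col r p" "col r q" using assms(2,3) collinear_commute by metis+
  qed
  ultimately show ?thesis using that by blast
qed

lemma not_collinear_if_common_neighbours:
  assumes "\<not> col t1 t2" "t1 \<noteq> t2" "col u t1" "col u t2" "col v t1" "col v t2" "u \<noteq> v"
  shows "\<not> col u v"
proof
  assume "col u v"
  obtain l1 where l1: "l1 \<in> L" "u \<in> l1" "v \<in> l1" "t1 \<in> l1"
    using collinear_triangle[OF \<open>col u v\<close>] assms(3,5) collinear_commute by metis
  obtain l2 where l2: "l2 \<in> L" "u \<in> l2" "v \<in> l2" "t2 \<in> l2"
    using collinear_triangle[OF \<open>col u v\<close>] assms(4,6) collinear_commute by metis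
  have "l1 = l2" using line_eq_if_two_points[OF l1(1) l2(1)] l1 l2 assms(7) by blast
  then show False using collinearI[OF l1(1,4)] l2(4) assms(1,2) by blast
qed

lemma lines_through_meet_triad:
  assumes "triad P L X" "\<forall>q\<in>X. col p q" "m \<in> L" "p \<in> m"
  shows "\<exists>q\<in>X. q \<in> m"
proof -
  obtain q1 q2 q3 where X: "X = {q1, q2, q3}" "q1 \<noteq> q2" "q1 \<noteq> q3" "q2 \<noteq> q3"
    using assms(1) unfolding triad_def by blast
  obtain l1 where l1: "l1 \<in> L" "p \<in> l1" "q1 \<in> l1" using assms(2) X(1) collinearE by blast
  obtain l2 where l2: "l2 \<in> L" "p \<in> l2" "q2 \<in> l2" using assms(2) X(1) collinearE by blast
  obtain l3 where l3: "l3 \<in> L" "p \<in> l3" "q3 \<in> l3" using assms(2) X(1) collinearE by blast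
  have "l1 \<noteq> l2" "l1 \<noteq> l3" "l2 \<noteq> l3"
    using l1 l2 l3 X collinearI triad_not_collinear[OF assms(1)] by blast+
  then have "card {l1, l2, l3} = 3" by simp
  moreover have "p \<in> P" using assms(2) X(1) unfolding collinear_def by blast
  moreover have "{l1, l2, l3} \<subseteq> {l \<in> L. p \<in> l}" using l1 l2 l3 by blast
  ultimately have "{l1, l2, l3} = {l \<in> L. p \<in> l}"
    using card_lines_through by (metis card_subset_eq card.infinite zero_neq_numeral)
  then show ?thesis using assms(3,4) l1 l2 l3 X(1) by blast
qed

lemma perp_some_point_of_triad:
  assumes "triad P L X" "\<forall>q\<in>X. col p q" "a \<in> perp P L p"
  shows "\<exists>q\<in>X. a \<in> perp P L q"
proof (cases "a = p")
  case True
  obtain q where "q \<in> X" using assms(1) unfolding triad_def by blast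
  then show ?thesis using True assms(2) unfolding perp_def by (auto simp: collinear_commute)
next
  case False
  then have "col p a" using assms(3) unfolding perp_def by blast
  then obtain m where m: "m \<in> L" "p \<in> m" "a \<in> m" by (rule collinearE)
  then obtain q where "q \<in> X" "q \<in> m" using lines_through_meet_triad[OF assms(1,2)] by blast
  then show ?thesis using perp_if_on_line[OF m(1,3)] by blast
qed

lemma common_neighbour_in_triad:
  assumes "triad P L X" "\<forall>q\<in>X. col v q \<and> col w q" "v \<noteq> w" "\<not> col v w"
    and "col v s" "col w s"
  shows "s \<in> X"
proof -
  obtain m where m: "m \<in> L" "v \<in> m" "s \<in> m" using assms(5) by (rule collinearE)
  then obtain q where q: "q \<in> X" "q \<in> m"
    using lines_through_meet_triad[OF assms(1)] assms(2) by blast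
  have "w \<notin> m" using collinearI[OF m(1,2)] assms(3,4) by blast
  moreover have "w \<in> P" using assms(6) unfolding collinear_def by blast
  ultimately have "s = q"
    using on_line_if_collinear_two_points[OF _ m(1) m(3) q(2)] assms(2,6) q(1) by blast
  then show ?thesis using q(1) by blast
qed

lemma triad_of_common_neighbours:
  assumes "triad P L X" "u \<noteq> v" "u \<noteq> w" "v \<noteq> w"
    and "\<forall>x\<in>X. col u x \<and> col v x \<and> col w x"
  shows "triad P L {u, v, w}"
proof -
  obtain t1 t2 where t: "t1 \<in> X" "t2 \<in> X" "t1 \<noteq> t2"
    using assms(1) unfolding triad_def by blast
  have "\<not> col t1 t2" using triad_not_collinear[OF assms(1) t(1,2)] .
  then have "\<not> col u v" "\<not> col u w" "\<not> col v w"
    using not_collinear_if_common_neighbours[OF _ t(3)] assms(2-5) t(1,2) by blast+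
  moreover have "u \<in> P" "v \<in> P" "w \<in> P" using assms(5) t(1) unfolding collinear_def by blast+
  ultimately show ?thesis using assms(2-4) unfolding triad_def by blast
qed

lemma line_perp_cover:
  assumes "l \<in> L" "a \<in> P"
  shows "\<exists>w\<in>l. a \<in> perp P L w"
proof (cases "a \<in> l")
  case True
  then show ?thesis unfolding perp_def by blast
next
  case False
  then obtain c where "c \<in> l" "col a c" using ex1_collinear_on_line[OF assms(2,1)] by blast
  then show ?thesis by (auto simp: mem_perp_iff)
qed

lemma setperp_line:
  assumes "l \<in> L"
  shows "setperp P L l = l"
proof
  show "l \<subseteq> setperp P L l"
    using line_subset[OF assms] perp_if_on_line[OF assms] unfolding setperp_def by blast
next
  show "setperp P L l \<subseteq> l"
  proof
    fix x assume x: "x \<in> setperp P L l"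
    show "x \<in> l"
    proof (rule ccontr)
      assume "x \<notin> l"
      have "\<not> card l \<le> Suc 0" using card_line[OF assms] by simp
      then obtain a c where "a \<in> l" "c \<in> l" "a \<noteq> c"
        using card_le_Suc0_iff_eq[OF finite_line[OF assms]] by blast
      moreover have "col x a" "col x c"
        using x \<open>x \<notin> l\<close> \<open>a \<in> l\<close> \<open>c \<in> l\<close> unfolding setperp_def perp_def
        by (auto simp: collinear_commute)
      ultimately show False
        using on_line_if_collinear_two_points[OF _ assms] x \<open>x \<notin> l\<close> unfolding setperp_def by blast
    qed
  qed
qed

lemma grid_perp_cover:
  assumes "triad P L X" "triad P L U" "\<forall>x\<in>X. \<forall>u\<in>U. col x u" "a \<in> P"
  shows "\<exists>u\<in>U. a \<in> perp P L u"
proof (rule ccontr)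
  (* Otherwise a is in the perp of no point of X either, so a is collinear with the third point c
     of the line xu; the third point s of the line ac is then collinear with v and w, so s lies in X
     although it is collinear with a. *)
  assume far_U: "\<not> (\<exists>u\<in>U. a \<in> perp P L u)"
  obtain u v w where U: "U = {u, v, w}" "u \<noteq> v" "u \<noteq> w" "v \<noteq> w"
    using assms(2) unfolding triad_def by blast
  obtain x where "x \<in> X" using assms(1) unfolding triad_def by blast
  have far_X: "a \<notin> perp P L t" if "t \<in> X" for t
    using perp_some_point_of_triad[OF assms(2), of t a] assms(3) that far_U by blast
  obtain m where m: "m \<in> L" "x \<in> m" "u \<in> m"
    using assms(3) \<open>x \<in> X\<close> U(1) collinearE by blast
  have "a \<notin> m" using perp_if_on_line[OF m(1) _ m(3)] far_U U(1) by blast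
  then obtain c where c: "c \<in> m" "col a c" using ex1_collinear_on_line[OF assms(4) m(1)] by blast
  have "c \<noteq> x" using c(2) far_X[OF \<open>x \<in> X\<close>] unfolding perp_def by (auto simp: collinear_commute)
  obtain l where l: "l \<in> L" "a \<in> l" "c \<in> l" using c(2) by (rule collinearE)
  moreover have "a \<noteq> c" using c(2) unfolding collinear_def by blast
  ultimately obtain s where l_eq: "l = {a, c, s}" by (rule line_third_point)
  have "col t s" if t: "t \<in> {v, w}" for t
  proof -
    have "t \<notin> l" using perp_if_on_line[OF l(1) l(2)] far_U U(1) t by blast
    moreover have "t \<in> P" "col t x"
      using assms(3) \<open>x \<in> X\<close> U(1) t unfolding collinear_def by blast+
    ultimately obtain d where d: "d \<in> l" "col t d" using ex1_collinear_on_line l(1) by blast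
    have "d \<noteq> a" using d(2) far_U U(1) t unfolding perp_def by (auto simp: collinear_commute)
    moreover have "d \<noteq> c"
    proof
      assume "d = c"
      then have "t \<in> m"
        using on_line_if_collinear_two_points[OF \<open>t \<in> P\<close> m(1) c(1) m(2) \<open>c \<noteq> x\<close>] d(2) \<open>col t x\<close>
        by blast
      then show False
        using collinearI[OF m(1,3)] triad_not_collinear[OF assms(2)] U t by blast
    qed
    ultimately show ?thesis using d l_eq by blast
  qed
  moreover have "\<forall>q\<in>X. col v q \<and> col w q"
    using assms(3) U(1) by (metis collinear_commute insertCI)
  moreover have "\<not> col v w" using triad_not_collinear[OF assms(2)] U(1) by blast
  ultimately have "s \<in> X" using common_neighbour_in_triad[OF assms(1) _ U(4)] by blast
  then show False using far_X perp_if_on_line[OF l(1) l(2)] l_eq by blast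
qed

lemma line_or_triad_perp_cover:
  assumes "X \<in> L \<or> triad P L X" "card (setperp P L X) = 3" "a \<in> P"
  shows "(\<exists>x\<in>X. a \<in> perp P L x) \<and> (\<exists>u\<in>setperp P L X. a \<in> perp P L u)"
  using assms(1)
proof
  assume "X \<in> L"
  then show ?thesis using line_perp_cover setperp_line assms(3) by simp
next
  assume X: "triad P L X"
  obtain u v w where U: "setperp P L X = {u, v, w}" "u \<noteq> v" "u \<noteq> w" "v \<noteq> w"
    using assms(2) by (metis card_3_iff)
  have col_XU: "\<forall>x\<in>X. \<forall>u\<in>setperp P L X. col u x"
    using setperp_triad_collinear[OF X] by blast
  then have "triad P L (setperp P L X)"
    using triad_of_common_neighbours[OF X U(2-4)] U(1) by simp
  then show ?thesis
    using grid_perp_cover[OF X] grid_perp_cover[OF _ X] col_XU assms(3)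
    by (metis collinear_commute)
qed

end

lemma collinear_if_iso_collinear:
  assumes iso: "geom_iso f P L P' L'" and lines: "\<forall>l'\<in>L'. l' \<subseteq> P'"
    and "x \<in> P" "y \<in> P" "collinear P' L' (f x) (f y)"
  shows "collinear P L x y"
proof -
  obtain l' where l': "l' \<in> L'" "f x \<in> l'" "f y \<in> l'" "f x \<noteq> f y"
    using assms(5) unfolding collinear_def by blast
  have "l' \<subseteq> f ` P"
    using lines l'(1) iso unfolding geom_iso_def bij_betw_def by blast
  then have "f ` {p \<in> P. f p \<in> l'} = l'" by blast
  then have "{p \<in> P. f p \<in> l'} \<in> L" using iso l'(1) unfolding geom_iso_def by auto
  then show ?thesis
    unfolding collinear_def using assms(3,4) l' by (intro conjI bexI[of _ "{p \<in> P. f p \<in> l'}"]) auto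
qed

lemma triad_image_if_iso:
  assumes iso: "geom_iso f P L P' L'" and lines: "\<forall>l'\<in>L'. l' \<subseteq> P'"
    and "triad P L T"
  shows "triad P' L' (f ` T)"
proof -
  obtain x y z where T: "T = {x, y, z}" "x \<in> P" "y \<in> P" "z \<in> P" "x \<noteq> y" "x \<noteq> z" "y \<noteq> z"
    "\<not> collinear P L x y" "\<not> collinear P L x z" "\<not> collinear P L y z"
    using assms(3) unfolding triad_def by blast
  have bij: "bij_betw f P P'" using iso unfolding geom_iso_def by blast
  have "f x \<in> P'" "f y \<in> P'" "f z \<in> P'" using T(2-4) bij bij_betw_apply by metis+
  moreover have "f x \<noteq> f y" "f x \<noteq> f z" "f y \<noteq> f z"
    using T(2-7) bij unfolding bij_betw_def inj_on_def by metis+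
  moreover have "\<not> collinear P' L' (f x) (f y)" "\<not> collinear P' L' (f x) (f z)"
    "\<not> collinear P' L' (f y) (f z)"
    using collinear_if_iso_collinear[OF iso lines] T by blast+
  ultimately show ?thesis unfolding triad_def T(1) by blast
qed

lemma calL_perp_cover:
  assumes S': "gq22 P' L'" and iso: "geom_iso f P L P' L'"
    and "Ln \<in> calL P L P' L' f" "b \<in> P'"
  shows "(\<exists>x u. BPair x u \<in> Ln \<and> b \<in> perp P' L' (f x))
    \<and> (\<exists>x u. BPair x u \<in> Ln \<and> b \<in> perp P' L' u)"
proof -
  interpret S': gq22_space P' L' by (rule gq22_space.intro[OF S'])
  obtain x y z u v w where Ln: "Ln = {BPair x u, BPair y v, BPair z w}"
    and T: "{x, y, z} \<subseteq> P" "{x, y, z} \<in> L \<or> complete_triad P L {x, y, z}"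
    and U: "{u, v, w} = setperp P' L' (f ` {x, y, z})" "u \<noteq> v" "u \<noteq> w" "v \<noteq> w"
    using assms(3) unfolding calL_def calP_def by blast
  have "f ` {x, y, z} \<in> L' \<or> triad P' L' (f ` {x, y, z})"
    using T iso triad_image_if_iso[OF iso] S'.line_subset
    unfolding geom_iso_def complete_triad_def by blast
  moreover have "card (setperp P' L' (f ` {x, y, z})) = 3" using U by (metis card_3_iff)
  ultimately show ?thesis
    using S'.line_or_triad_perp_cover assms(4) Ln U(1) by blast
qed

lemma calL_mem:
  "Ln \<in> calL P L P' L' f \<Longrightarrow> c \<in> Ln \<Longrightarrow> \<exists>x u. c = BPair x u \<and> (x, u) \<in> calP P L P' L' f"
  unfolding calL_def by blast

lemma calL_perp:
  assumes "Ln \<in> calL P L P' L' f" "BPair x u \<in> Ln" "BPair z w \<in> Ln"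
  shows "u \<in> perp P' L' (f z)"
  using assms unfolding calL_def setperp_def by (auto simp: insert_commute)

lemma calL_eq_if_three_points:
  assumes "Ln \<in> calL P L P' L' f" "p \<in> Ln" "q \<in> Ln" "r \<in> Ln" "p \<noteq> q" "p \<noteq> r" "q \<noteq> r"
  shows "Ln = {p, q, r}"
proof -
  obtain a b c where "Ln = {a, b, c}" using assms(1) unfolding calL_def by blast
  then have "finite Ln" "card Ln \<le> 3" by (auto simp: card_insert_if)
  then show ?thesis using assms(2-7) by (intro card_seteq[symmetric]) auto
qed

lemma badj_special_line:
  assumes "(x, u) \<in> calP P L P' L' f"
    and "c \<in> {BS x, BPair x u, BS' u}" "d \<in> {BS x, BPair x u, BS' u}" "c \<noteq> d"
  shows "(c, d) \<in> badj P L P' L' f"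
  using assms unfolding badj_def blines_def by blast

lemma badj_BS_BPair: "(BS a, BPair x u) \<in> badj P L P' L' f \<Longrightarrow> x = a"
  unfolding badj_def blines_def calL_def by auto

lemma badj_BS'_BPair: "(BS' b, BPair x u) \<in> badj P L P' L' f \<Longrightarrow> u = b"
  unfolding badj_def blines_def calL_def by auto

lemma has_dist_2I:
  assumes "(a, m) \<in> R" "(m, b) \<in> R" "a \<noteq> b" "(a, b) \<notin> R"
  shows "has_dist R a b 2"
  using assms unfolding has_dist_def by (auto simp: numeral_2_eq_2 less_Suc_eq)

lemma has_dist_3_not_relpow_2: "has_dist R a b 3 \<Longrightarrow> (a, b) \<notin> R ^^ 2"
  unfolding has_dist_def by simp

lemma relpow_2_BS_BPair:
  assumes "(a, u) \<in> calP P L P' L' f" "(x, u) \<in> calP P L P' L' f"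
  shows "(BS a, BPair x u) \<in> badj P L P' L' f ^^ 2"
  using badj_special_line[OF assms(1), of "BS a" "BS' u"] badj_special_line[OF assms(2), of "BS' u"]
  by (auto simp: numeral_2_eq_2)

lemma relpow_2_BS'_BPair:
  assumes "(x, b) \<in> calP P L P' L' f" "(x, u) \<in> calP P L P' L' f"
  shows "(BS' b, BPair x u) \<in> badj P L P' L' f ^^ 2"
  using badj_special_line[OF assms(1), of "BS' b" "BS x"] badj_special_line[OF assms(2), of "BS x"]
  by (auto simp: numeral_2_eq_2)

lemma calL_dist_BS:
  assumes S': "gq22 P' L'" and iso: "geom_iso f P L P' L'" and Ln: "Ln \<in> calL P L P' L' f"
    and "a \<in> P" and pqr: "p \<in> Ln" "q \<in> Ln" "r \<in> Ln" "p \<noteq> q" "p \<noteq> r" "q \<noteq> r"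
    and "has_dist (badj P L P' L' f) (BS a) p 3" "has_dist (badj P L P' L' f) (BS a) q 3"
  shows "has_dist (badj P L P' L' f) (BS a) r 2"
proof -
  have far: "f a \<notin> perp P' L' u" if "BPair x u \<in> {p, q}" for x u
  proof
    assume "f a \<in> perp P' L' u"
    then have "(a, u) \<in> calP P L P' L' f" using \<open>a \<in> P\<close> perp_commute unfolding calP_def by fast
    moreover have "(x, u) \<in> calP P L P' L' f" using calL_mem[OF Ln] that pqr by blast
    ultimately have "(BS a, BPair x u) \<in> badj P L P' L' f ^^ 2" by (rule relpow_2_BS_BPair)
    then show False
      using that has_dist_3_not_relpow_2[OF assms(11)] has_dist_3_not_relpow_2[OF assms(12)] by blast
  qed
  have "f a \<in> P'" using iso \<open>a \<in> P\<close> unfolding geom_iso_def bij_betw_def by blast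
  then obtain x u where xu: "BPair x u \<in> Ln" "f a \<in> perp P' L' u"
    using calL_perp_cover[OF S' iso Ln] by blast
  then have r: "r = BPair x u" using far calL_eq_if_three_points[OF Ln pqr] by blast
  obtain y v where p: "p = BPair y v" using calL_mem[OF Ln pqr(1)] by blast
  have "f x \<in> perp P' L' v" using calL_perp[OF Ln _ xu(1), of y v] pqr(1) p perp_commute by metis
  then have "a \<noteq> x" using far[of y v] p by blast
  have "u \<in> perp P' L' (f a)" using xu(2) perp_commute by metis
  then have "(a, u) \<in> calP P L P' L' f" "(x, u) \<in> calP P L P' L' f"
    using \<open>a \<in> P\<close> calL_mem[OF Ln xu(1)] unfolding calP_def by auto
  then have "(BS a, BS' u) \<in> badj P L P' L' f" "(BS' u, BPair x u) \<in> badj P L P' L' f"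
    by (auto intro: badj_special_line)
  moreover have "(BS a, BPair x u) \<notin> badj P L P' L' f"
    using badj_BS_BPair \<open>a \<noteq> x\<close> by metis
  ultimately show ?thesis unfolding r by (intro has_dist_2I) auto
qed

lemma calL_dist_BS':
  assumes S': "gq22 P' L'" and iso: "geom_iso f P L P' L'" and Ln: "Ln \<in> calL P L P' L' f"
    and "b \<in> P'" and pqr: "p \<in> Ln" "q \<in> Ln" "r \<in> Ln" "p \<noteq> q" "p \<noteq> r" "q \<noteq> r"
    and "has_dist (badj P L P' L' f) (BS' b) p 3" "has_dist (badj P L P' L' f) (BS' b) q 3"
  shows "has_dist (badj P L P' L' f) (BS' b) r 2"
proof -
  have far: "b \<notin> perp P' L' (f x)" if "BPair x u \<in> {p, q}" for x u
  proof
    assume "b \<in> perp P' L' (f x)"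
    moreover have "(x, u) \<in> calP P L P' L' f" using calL_mem[OF Ln] that pqr by blast
    ultimately have "(x, b) \<in> calP P L P' L' f" "(x, u) \<in> calP P L P' L' f"
      unfolding calP_def by auto
    then have "(BS' b, BPair x u) \<in> badj P L P' L' f ^^ 2" by (rule relpow_2_BS'_BPair)
    then show False
      using that has_dist_3_not_relpow_2[OF assms(11)] has_dist_3_not_relpow_2[OF assms(12)] by blast
  qed
  obtain x u where xu: "BPair x u \<in> Ln" "b \<in> perp P' L' (f x)"
    using calL_perp_cover[OF S' iso Ln \<open>b \<in> P'\<close>] by blast
  then have r: "r = BPair x u" using far calL_eq_if_three_points[OF Ln pqr] by blast
  obtain y v where p: "p = BPair y v" using calL_mem[OF Ln pqr(1)] by blast
  have "u \<in> perp P' L' (f y)" using calL_perp[OF Ln xu(1), of y v] pqr(1) p by blast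
  then have "b \<noteq> u" using far[of y v] p by blast
  have "(x, b) \<in> calP P L P' L' f" "(x, u) \<in> calP P L P' L' f"
    using xu calL_mem[OF Ln xu(1)] unfolding calP_def by auto
  then have "(BS' b, BS x) \<in> badj P L P' L' f" "(BS x, BPair x u) \<in> badj P L P' L' f"
    by (auto intro: badj_special_line)
  moreover have "(BS' b, BPair x u) \<notin> badj P L P' L' f"
    using badj_BS'_BPair \<open>b \<noteq> u\<close> by metis
  ultimately show ?thesis unfolding r by (intro has_dist_2I) auto
qed

theorem proposition4p8:
  fixes P :: "'a set" and L :: "'a set set" and P' :: "'b set" and L' :: "'b set set"
    and f :: "'a \<Rightarrow> 'b"
  assumes "gq22 P L" and "gq22 P' L'" and "geom_iso f P L P' L'"
    and "Ln \<in> calL P L P' L' f"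
    and "\<alpha> \<in> BS ` P \<union> BS' ` P'"
    and "p \<in> Ln" and "q \<in> Ln" and "r \<in> Ln"
    and "p \<noteq> q" and "p \<noteq> r" and "q \<noteq> r"
    and "has_dist (badj P L P' L' f) \<alpha> p 3" and "has_dist (badj P L P' L' f) \<alpha> q 3"
  shows "has_dist (badj P L P' L' f) \<alpha> r 2"
  using assms(5)
proof
  assume "\<alpha> \<in> BS ` P"
  then show ?thesis using calL_dist_BS[OF assms(2-4) _ assms(6-11)] assms(12,13) by blast
next
  assume "\<alpha> \<in> BS' ` P'"
  then show ?thesis using calL_dist_BS'[OF assms(2-4) _ assms(6-11)] assms(12,13) by blast
qed

end
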